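(* Let $m,n \ge 2$ be integers. The Cartesian product $K_m \times K_n$ is a circulant graph if and only if either $\gcd(m,n)=1$ or $m=n=2$.
   Context: The Cartesian product $G \times H$ of graphs $G$ and $H$ has vertex set $V(G)\times V(H)$, with $(g,h)$ adjacent to $(g',h')$ if and only if either $g=g'$ and $h$ is adjacent to $h'$ in $H$, or $h=h'$ and $g$ is adjacent to $g'$ in $G$. For an integer $n\ge 1$ and a set $S$ of integers, the circulant graph $C_nS$ has vertex set $\{0,1,\dots,n-1\}$, with $i$ adjacent to $j$ if and only if $i-j \equiv \pm s \pmod n$ for some $s\in S$. A graph is circulant if it is isomorphic to some $C_nS$; equivalently, if its automorphism group contains a cyclic subgroup acting transitively on the vertices. $K_n$ denotes the complete graph on $n$ vertices (no loops). *)

theory Defs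
  imports Main "HOL-Number_Theory.Cong"
begin

text \<open>A graph is represented by a vertex set together with an adjacency relation
  (only its restriction to the vertex set matters).\<close>

definition graph_iso :: "'a set \<Rightarrow> ('a \<Rightarrow> 'a \<Rightarrow> bool) \<Rightarrow> 'b set \<Rightarrow> ('b \<Rightarrow> 'b \<Rightarrow> bool) \<Rightarrow> bool" where
  "graph_iso V E W F \<longleftrightarrow>
     (\<exists>f. bij_betw f V W \<and> (\<forall>x\<in>V. \<forall>y\<in>V. E x y \<longleftrightarrow> F (f x) (f y)))"

definition circ_verts :: "nat \<Rightarrow> nat set" where
  "circ_verts n = {0..<n}"

definition circ_adj :: "nat \<Rightarrow> int set \<Rightarrow> nat \<Rightarrow> nat \<Rightarrow> bool" where
  "circ_adj n S i j \<longleftrightarrow>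
     (\<exists>s\<in>S. [int i - int j = s] (mod int n) \<or> [int i - int j = - s] (mod int n))"

definition is_circulant :: "'a set \<Rightarrow> ('a \<Rightarrow> 'a \<Rightarrow> bool) \<Rightarrow> bool" where
  "is_circulant V E \<longleftrightarrow>
     (\<exists>(n::nat) (S::int set). n \<ge> 1 \<and> graph_iso V E (circ_verts n) (circ_adj n S))"

definition complete_verts :: "nat \<Rightarrow> nat set" where
  "complete_verts n = {0..<n}"

definition complete_adj :: "nat \<Rightarrow> nat \<Rightarrow> bool" where
  "complete_adj i j \<longleftrightarrow> i \<noteq> j"

definition cart_verts :: "'a set \<Rightarrow> 'b set \<Rightarrow> ('a \<times> 'b) set" where
  "cart_verts V W = V \<times> W"

definition cart_adj :: "('a \<Rightarrow> 'a \<Rightarrow> bool) \<Rightarrow> ('b \<Rightarrow> 'b \<Rightarrow> bool) \<Rightarrow> ('a \<times> 'b) \<Rightarrow> ('a \<times> 'b) \<Rightarrow> bool" where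
  "cart_adj E F p q \<longleftrightarrow>
     (fst p = fst q \<and> F (snd p) (snd q)) \<or> (snd p = snd q \<and> E (fst p) (fst q))"

end

theory Submission
  imports Defs
begin

text \<open>
  Put N = m n. A circulant structure on K_m x K_n is a labelling of its vertices by the residues
  mod N under which the translation i \<mapsto> i + 1 is an automorphism. Cliques of the rook's graph
  lie in lines, so the translation maps each row into a row or into a column, and a 2 x 2 square
  shows that it does the same to every row; likewise for the columns. Rows and columns cannot both
  go to rows. If both are preserved, the row of 0 returns after t \<le> m steps and its column after
  u \<le> n steps, so N divides lcm t u \<le> t u \<le> N, forcing t = m, u = n and coprimality. If they are
  swapped, translation by 2 preserves both; translation by 2 t, where t \<le> m is the return time of
  the row of 0, then fixes the vertex in the row of 0 and the column of 1, so N divides 2 t and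
  n \<le> 2; symmetrically m \<le> 2. Conversely, for coprime m and n the Chinese remainder map
  i \<mapsto> (i mod m, i mod n) identifies K_m x K_n with the circulant whose connection set consists of
  the d divisible by exactly one of m and n, and K_2 x K_2 is the 4-cycle.
\<close>

lemma graph_iso_sym:
  assumes "graph_iso V E W F"
  shows "graph_iso W F V E"
proof -
  obtain f where f: "bij_betw f V W" and adj: "\<forall>x\<in>V. \<forall>y\<in>V. E x y \<longleftrightarrow> F (f x) (f y)"
    using assms unfolding graph_iso_def by blast
  have g: "bij_betw (inv_into V f) W V"
    using f by (rule bij_betw_inv_into)
  have "\<forall>x\<in>W. \<forall>y\<in>W. F x y \<longleftrightarrow> E (inv_into V f x) (inv_into V f y)"
    using adj f bij_betw_apply[OF g] by (simp add: bij_betw_inv_into_right)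
  with g show ?thesis
    unfolding graph_iso_def by blast
qed

lemma circ_adj_Suc [simp]: "circ_adj N S (Suc i) (Suc j) \<longleftrightarrow> circ_adj N S i j"
  by (simp add: circ_adj_def)

lemma circ_adj_mod [simp]: "circ_adj N S (i mod N) (j mod N) \<longleftrightarrow> circ_adj N S i j"
proof -
  have "[int (i mod N) - int (j mod N) = int i - int j] (mod int N)"
    unfolding cong_def zmod_int by (simp add: mod_diff_eq)
  then show ?thesis
    unfolding circ_adj_def by (meson cong_sym cong_trans)
qed

lemma cart_adj_complete_iff:
  "cart_adj complete_adj complete_adj p q \<longleftrightarrow> p \<noteq> q \<and> (fst p = fst q \<or> snd p = snd q)"
  by (auto simp: cart_adj_def complete_adj_def prod_eq_iff)

lemma pairwise_collinear_in_line:
  assumes collinear: "\<forall>x\<in>X. \<forall>y\<in>X. f x = f y \<or> g x = g y"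
  shows "(\<forall>x\<in>X. \<forall>y\<in>X. f x = f y) \<or> (\<forall>x\<in>X. \<forall>y\<in>X. g x = g y)"
proof (cases "\<forall>x\<in>X. \<forall>y\<in>X. f x = f y")
  case False
  then obtain x y where x: "x \<in> X" and y: "y \<in> X" and "f x \<noteq> f y"
    by blast
  then have "g x = g y"
    using collinear[rule_format, OF x y] by simp
  have "g z = g x" if "z \<in> X" for z
  proof (cases "f z = f x")
    case True
    then have "g z = g y"
      using collinear[rule_format, OF that y] \<open>f x \<noteq> f y\<close> by simp
    with \<open>g x = g y\<close> show ?thesis
      by simp
  next
    case False
    then show ?thesis
      using collinear[rule_format, OF that x] by simp
  qed
  then show ?thesis
    by simp
qed blast

lemma gcd_eq_1_if_dvd_lcm:
  fixes m n t u :: nat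
  assumes "0 < t" "t \<le> m" "0 < u" "u \<le> n" and "m * n dvd lcm t u"
  shows "gcd m n = 1"
proof -
  have "m * n \<le> lcm t u"
    using assms by (simp add: dvd_imp_le lcm_pos_nat)
  also have "lcm t u \<le> t * u"
    using assms by (simp add: dvd_imp_le lcm_least)
  also have "t * u \<le> m * n"
    using assms by (simp add: mult_le_mono)
  finally have "lcm t u = t * u" "t * u = m * n"
    using \<open>m * n \<le> lcm t u\<close> \<open>lcm t u \<le> t * u\<close> by linarith+
  have "t = m"
  proof (rule ccontr)
    assume "t \<noteq> m"
    then have "t * u < m * u"
      using assms by simp
    also have "\<dots> \<le> m * n"
      using assms by simp
    finally show False
      using \<open>t * u = m * n\<close> by simp
  qed
  moreover have "u = n"
    using \<open>t * u = m * n\<close> \<open>t = m\<close> assms by simp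
  moreover have "gcd t u = 1"
    using prod_gcd_lcm_nat[of t u] \<open>lcm t u = t * u\<close> assms by simp
  ultimately show ?thesis
    by simp
qed

lemma pigeonhole_nat_less:
  fixes f :: "nat \<Rightarrow> nat"
  assumes "\<And>a. f a < m"
  obtains a b where "a < b" "b \<le> m" "f a = f b"
proof -
  have "\<not> inj_on f {..m}"
  proof (rule pigeonhole)
    have "card (f ` {..m}) \<le> card {..<m}"
      by (rule card_mono) (use assms in auto)
    then show "card (f ` {..m}) < card {..m}"
      by simp
  qed
  then obtain a b where "a \<le> m" "b \<le> m" "a \<noteq> b" "f a = f b"
    unfolding inj_on_def by auto
  then show ?thesis
    using that[of a b] that[of b a] by (cases "a < b") auto
qed

definition shift_maps_fibres :: "(nat \<Rightarrow> 'a) \<Rightarrow> (nat \<Rightarrow> 'b) \<Rightarrow> nat \<Rightarrow> bool" where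
  "shift_maps_fibres f g s \<longleftrightarrow> (\<forall>i j. f i = f j \<longrightarrow> g (i + s) = g (j + s))"

lemma shift_maps_fibresD: "shift_maps_fibres f g s \<Longrightarrow> f i = f j \<Longrightarrow> g (i + s) = g (j + s)"
  unfolding shift_maps_fibres_def by blast

lemma shift_maps_fibres_add:
  assumes "shift_maps_fibres f g s" and "shift_maps_fibres g h s'"
  shows "shift_maps_fibres f h (s + s')"
  unfolding shift_maps_fibres_def
proof (intro allI impI)
  fix i j
  assume "f i = f j"
  then have "g (i + s) = g (j + s)"
    by (rule shift_maps_fibresD[OF assms(1)])
  then have "h (i + s + s') = h (j + s + s')"
    by (rule shift_maps_fibresD[OF assms(2)])
  then show "h (i + (s + s')) = h (j + (s + s'))"
    by (simp add: add.assoc)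
qed

lemma shift_maps_fibres_mult:
  assumes "shift_maps_fibres f f s"
  shows "shift_maps_fibres f f (k * s)"
proof (induction k)
  case 0
  show ?case
    by (simp add: shift_maps_fibres_def)
next
  case (Suc k)
  show ?case
    using shift_maps_fibres_add[OF assms Suc.IH] by simp
qed

text \<open>
  Vertex i of K_m x K_n, read mod m n, lies in row r i and column c i; the labelling is extended
  periodically to all of nat, and the last assumption says that i \<mapsto> i + 1 preserves collinearity,
  i.e. is an automorphism.
\<close>

locale cyclic_rook =
  fixes m n :: nat and r c :: "nat \<Rightarrow> nat"
  assumes two_le_m: "2 \<le> m" and two_le_n: "2 \<le> n"
    and row_less: "r i < m" and col_less: "c i < n"
    and ex_row_col: "a < m \<Longrightarrow> b < n \<Longrightarrow> \<exists>i. r i = a \<and> c i = b"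
    and row_col_eq_iff: "r i = r j \<and> c i = c j \<longleftrightarrow> [i = j] (mod m * n)"
    and collinear_Suc_iff:
      "r (Suc i) = r (Suc j) \<or> c (Suc i) = c (Suc j) \<longleftrightarrow> r i = r j \<or> c i = c j"
begin

lemma cyclic_rook_transpose: "cyclic_rook n m c r"
proof
  show "2 \<le> n" "2 \<le> m" "c i < n" "r i < m" for i
    using two_le_m two_le_n row_less col_less by auto
  show "\<exists>i. c i = b \<and> r i = a" if "b < n" "a < m" for a b
    using ex_row_col[OF that(2,1)] by blast
  show "c i = c j \<and> r i = r j \<longleftrightarrow> [i = j] (mod n * m)" for i j
    using row_col_eq_iff[of i j] by (metis mult.commute)
  show "c (Suc i) = c (Suc j) \<or> r (Suc i) = r (Suc j) \<longleftrightarrow> c i = c j \<or> r i = r j" for i j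
    using collinear_Suc_iff[of i j] by blast
qed

lemma row_col_Suc_eq_iff: "r (Suc i) = r (Suc j) \<and> c (Suc i) = c (Suc j) \<longleftrightarrow> r i = r j \<and> c i = c j"
  using cong_add_rcancel_nat[of i 1 j] by (simp add: row_col_eq_iff)

lemma row_add_mult_period: "r (i + k * (m * n)) = r i"
  using row_col_eq_iff[of "i + k * (m * n)" i] by (simp add: cong_def)

definition row_to_row :: "nat \<Rightarrow> bool" where
  "row_to_row a \<longleftrightarrow> (\<forall>i j. r i = a \<longrightarrow> r j = a \<longrightarrow> r (Suc i) = r (Suc j))"

definition row_to_col :: "nat \<Rightarrow> bool" where
  "row_to_col a \<longleftrightarrow> (\<forall>i j. r i = a \<longrightarrow> r j = a \<longrightarrow> c (Suc i) = c (Suc j))"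

lemma row_to_row_or_col: "row_to_row a \<or> row_to_col a"
  using pairwise_collinear_in_line[of "{i. r i = a}" "\<lambda>i. r (Suc i)" "\<lambda>i. c (Suc i)"]
  unfolding row_to_row_def row_to_col_def by (simp add: collinear_Suc_iff)

text \<open>Compare the images of (a, 0), (a, 1), (a', 0) and (a', 1).\<close>

lemma not_row_to_row_and_col:
  assumes "a < m" "a' < m" "row_to_row a" "row_to_col a'"
  shows False
proof -
  have "0 < n" "1 < n"
    using two_le_n by auto
  then obtain x x' y y' where
    x: "r x = a" "c x = 0" and x': "r x' = a" "c x' = 1" and
    y: "r y = a'" "c y = 0" and y': "r y' = a'" "c y' = 1"
    using ex_row_col assms(1,2) by metis
  have distinct: "\<not> (r (Suc u) = r (Suc v) \<and> c (Suc u) = c (Suc v))" if "c u \<noteq> c v" for u v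
    using that row_col_Suc_eq_iff by blast
  have "r (Suc x) = r (Suc x')"
    using assms(3) x x' unfolding row_to_row_def by blast
  moreover have "c (Suc y) = c (Suc y')"
    using assms(4) y y' unfolding row_to_col_def by blast
  moreover have "r (Suc x) = r (Suc y) \<or> c (Suc x) = c (Suc y)"
    using collinear_Suc_iff x y by simp
  moreover have "r (Suc x') = r (Suc y') \<or> c (Suc x') = c (Suc y')"
    using collinear_Suc_iff x' y' by simp
  moreover have "c x \<noteq> c x'" "c y \<noteq> c y'" "c x \<noteq> c y'" "c x' \<noteq> c y"
    using x x' y y' by simp_all
  ultimately show False
    using distinct by metis
qed

lemma shift_maps_rows_to_rows_or_cols: "shift_maps_fibres r r 1 \<or> shift_maps_fibres r c 1"
proof -
  have "0 < m"
    using two_le_m by simp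
  show ?thesis
  proof (cases "row_to_row 0")
    case True
    then have "row_to_row a" if "a < m" for a
      using that row_to_row_or_col[of a] not_row_to_row_and_col[of 0 a] \<open>0 < m\<close> by blast
    then have "shift_maps_fibres r r 1"
      unfolding shift_maps_fibres_def row_to_row_def using row_less by (metis Suc_eq_plus1)
    then show ?thesis ..
  next
    case False
    then have "row_to_col a" if "a < m" for a
      using that row_to_row_or_col[of 0] row_to_row_or_col[of a] not_row_to_row_and_col[of a 0] \<open>0 < m\<close>
      by blast
    then have "shift_maps_fibres r c 1"
      unfolding shift_maps_fibres_def row_to_col_def using row_less by (metis Suc_eq_plus1)
    then show ?thesis ..
  qed
qed

lemma row_returns:
  assumes "shift_maps_fibres r r s"
  obtains t where "0 < t" "t \<le> m" "\<And>k. r (k * t * s) = r 0"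
proof -
  obtain a b where ab: "a < b" "b \<le> m" "r (a * s) = r (b * s)"
    using pigeonhole_nat_less[of "\<lambda>a. r (a * s)"] row_less by blast
  define t where "t = b - a"
  have b: "b = a + t"
    using ab(1) by (simp add: t_def)
  have "m * n \<noteq> 0"
    using two_le_m two_le_n by simp
  then obtain N' where N': "m * n = Suc N'"
    using not0_implies_Suc by blast
  \<comment> \<open>translating forward by N' a s = (m n - 1) a s undoes the translation by a s\<close>
  have "r (a * s + N' * a * s) = r (b * s + N' * a * s)"
    using shift_maps_fibresD[OF shift_maps_fibres_mult[OF assms, of "N' * a"] ab(3)] by (simp add: mult.assoc)
  moreover have "a * s + N' * a * s = 0 + (a * s) * (m * n)" "b * s + N' * a * s = t * s + (a * s) * (m * n)"
    unfolding N' b by (simp_all add: algebra_simps)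
  ultimately have t: "r (t * s) = r 0"
    by (simp only: row_add_mult_period)
  have "r (k * t * s) = r 0" for k
  proof (induction k)
    case (Suc k)
    have "r (k * t * s + t * s) = r (0 + t * s)"
      using shift_maps_fibresD[OF shift_maps_fibres_mult[OF assms, of t] Suc.IH] by (simp add: mult.assoc)
    moreover have "Suc k * t * s = k * t * s + t * s"
      by (simp add: algebra_simps)
    ultimately show ?case
      using t by simp
  qed simp
  moreover have "0 < t" "t \<le> m"
    using ab by (simp_all add: t_def)
  ultimately show ?thesis
    using that by blast
qed

lemma gcd_eq_1_if_shift_preserves_lines:
  assumes "shift_maps_fibres r r 1" and "shift_maps_fibres c c 1"
  shows "gcd m n = 1"
proof -
  interpret transpose: cyclic_rook n m c r
    by (rule cyclic_rook_transpose)
  obtain t where t: "0 < t" "t \<le> m" "\<And>k. r (k * t * 1) = r 0"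
    using row_returns[OF assms(1)] by blast
  obtain u where u: "0 < u" "u \<le> n" "\<And>k. c (k * u * 1) = c 0"
    using transpose.row_returns[OF assms(2)] by blast
  have "r (lcm t u) = r 0" "c (lcm t u) = c 0"
    using t(3)[of "lcm t u div t"] u(3)[of "lcm t u div u"] by simp_all
  then have "[lcm t u = 0] (mod m * n)"
    using row_col_eq_iff[of "lcm t u" 0] by simp
  then show ?thesis
    using gcd_eq_1_if_dvd_lcm t(1,2) u(1,2) by (simp add: cong_0_iff)
qed

lemma not_shift_maps_rows_and_cols_to_rows:
  assumes "shift_maps_fibres r r 1" and "shift_maps_fibres c r 1"
  shows False
proof -
  obtain x where x: "r x = 0" "c x = 0"
    using ex_row_col[of 0 0] two_le_m two_le_n by auto
  obtain y where y: "r y = 0" "c y = 1"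
    using ex_row_col[of 0 1] two_le_m two_le_n by auto
  obtain z where z: "r z = 1" "c z = 0"
    using ex_row_col[of 1 0] two_le_m two_le_n by auto
  have "r (y + 1) = r (x + 1)"
    using shift_maps_fibresD[OF assms(1), of y x] x y by simp
  also have "\<dots> = r (z + 1)"
    using shift_maps_fibresD[OF assms(2), of x z] x z by simp
  finally show False
    using collinear_Suc_iff[of y z] y z by simp
qed

lemma n_le_2_if_shift_swaps_lines:
  assumes rc: "shift_maps_fibres r c 1" and cr: "shift_maps_fibres c r 1"
  shows "n \<le> 2"
proof -
  have rr: "shift_maps_fibres r r 2" and cc: "shift_maps_fibres c c 2"
    using shift_maps_fibres_add[OF rc cr] shift_maps_fibres_add[OF cr rc] by (simp_all only: one_add_one)
  obtain t where t: "0 < t" "t \<le> m" "\<And>k. r (k * t * 2) = r 0"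
    using row_returns[OF rr] by blast
  obtain z where z: "r z = r 0" "c z = c 1"
    using ex_row_col row_less col_less by blast
  have "r (t * 2 + z) = r z"
  proof -
    have "r (z + t * 2) = r (0 + t * 2)"
      using shift_maps_fibresD[OF shift_maps_fibres_mult[OF rr, of t] z(1)] by (simp add: mult.assoc)
    then show ?thesis
      using t(3)[of 1] z(1) by (simp add: add.commute)
  qed
  moreover have "c (t * 2 + z) = c z"
  proof -
    have "c (z + t * 2) = c (1 + t * 2)"
      using shift_maps_fibresD[OF shift_maps_fibres_mult[OF cc, of t] z(2)] by (simp add: mult.assoc)
    also have "\<dots> = c (0 + 1)"
      using shift_maps_fibresD[OF rc, of "t * 2" 0] t(3)[of 1] by (simp add: add.commute)
    finally show ?thesis
      using z(2) by (simp add: add.commute)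
  qed
  ultimately have "[t * 2 + z = z] (mod m * n)"
    using row_col_eq_iff[of "t * 2 + z" z] by simp
  then have "m * n dvd t * 2"
    by (simp add: cong_add_rcancel_0_nat cong_0_iff)
  then have "m * n \<le> t * 2"
    using t(1) by (simp add: dvd_imp_le)
  also have "\<dots> \<le> m * 2"
    using t(2) by simp
  finally have "m * n \<le> m * 2" .
  then show ?thesis
    using two_le_m by simp
qed

theorem gcd_eq_1_or_both_eq_2: "gcd m n = 1 \<or> m = 2 \<and> n = 2"
proof -
  interpret transpose: cyclic_rook n m c r
    by (rule cyclic_rook_transpose)
  consider
    "shift_maps_fibres r r 1" "shift_maps_fibres c c 1" |
    "shift_maps_fibres r r 1" "shift_maps_fibres c r 1" |
    "shift_maps_fibres r c 1" "shift_maps_fibres c c 1" |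
    "shift_maps_fibres r c 1" "shift_maps_fibres c r 1"
    using shift_maps_rows_to_rows_or_cols transpose.shift_maps_rows_to_rows_or_cols by blast
  then show ?thesis
  proof cases
    case 1
    then show ?thesis by (blast dest: gcd_eq_1_if_shift_preserves_lines)
  next
    case 2
    then show ?thesis by (blast dest: not_shift_maps_rows_and_cols_to_rows)
  next
    case 3
    then show ?thesis by (blast dest: transpose.not_shift_maps_rows_and_cols_to_rows)
  next
    case 4
    then have "n \<le> 2" "m \<le> 2"
      using n_le_2_if_shift_swaps_lines transpose.n_le_2_if_shift_swaps_lines by blast+
    then show ?thesis
      using two_le_m two_le_n by simp
  qed
qed

end

lemma cyclic_rook_if_circulant:
  fixes m n :: nat
  assumes "2 \<le> m" "2 \<le> n"
    and "is_circulant (cart_verts (complete_verts m) (complete_verts n)) (cart_adj complete_adj complete_adj)"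
  shows "\<exists>r c. cyclic_rook m n r c"
proof -
  let ?V = "{0..<m} \<times> {0..<n}"
  obtain N S where "graph_iso ?V (cart_adj complete_adj complete_adj) (circ_verts N) (circ_adj N S)"
    using assms(3) unfolding is_circulant_def cart_verts_def complete_verts_def by blast
  then have "graph_iso (circ_verts N) (circ_adj N S) ?V (cart_adj complete_adj complete_adj)"
    by (rule graph_iso_sym)
  then obtain g where g: "bij_betw g {0..<N} ?V"
    and adj: "\<And>i j. i < N \<Longrightarrow> j < N \<Longrightarrow>
      circ_adj N S i j \<longleftrightarrow> cart_adj complete_adj complete_adj (g i) (g j)"
    unfolding graph_iso_def circ_verts_def by auto
  have N: "N = m * n"
    using bij_betw_same_card[OF g] by simp
  then have "0 < N"
    using assms(1,2) by simp
  define r where "r i = fst (g (i mod N))" for i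
  define c where "c i = snd (g (i mod N))" for i
  have g_mod: "g (i mod N) \<in> ?V" for i
    using bij_betw_apply[OF g] \<open>0 < N\<close> by simp
  have g_mod_eq_iff: "g (i mod N) = g (j mod N) \<longleftrightarrow> [i = j] (mod N)" for i j
    using bij_betw_imp_inj_on[OF g] \<open>0 < N\<close> unfolding inj_on_def cong_def by auto
  have row_col_eq_iff: "r i = r j \<and> c i = c j \<longleftrightarrow> [i = j] (mod N)" for i j
    using g_mod_eq_iff[of i j] by (simp add: r_def c_def prod_eq_iff)
  have collinear_iff: "r i = r j \<or> c i = c j \<longleftrightarrow> [i = j] (mod N) \<or> circ_adj N S i j" for i j
  proof -
    have "r i = r j \<or> c i = c j \<longleftrightarrow>
      g (i mod N) = g (j mod N) \<or> cart_adj complete_adj complete_adj (g (i mod N)) (g (j mod N))"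
      by (auto simp: cart_adj_complete_iff r_def c_def prod_eq_iff)
    then show ?thesis
      using adj[of "i mod N" "j mod N"] g_mod_eq_iff \<open>0 < N\<close> by simp
  qed
  have "cyclic_rook m n r c"
  proof
    show "2 \<le> m" "2 \<le> n"
      using assms(1,2) .
    show "r i < m" "c i < n" for i
      using g_mod[of i] by (auto simp: r_def c_def)
    show "\<exists>i. r i = a \<and> c i = b" if "a < m" "b < n" for a b
    proof -
      have "(a, b) \<in> g ` {0..<N}"
        using bij_betw_imp_surj_on[OF g] that by simp
      then obtain i where "i < N" "g i = (a, b)"
        by auto
      then show ?thesis
        by (intro exI[of _ i]) (simp add: r_def c_def)
    qed
    show "r i = r j \<and> c i = c j \<longleftrightarrow> [i = j] (mod m * n)" for i j
      using row_col_eq_iff N by simp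
    show "r (Suc i) = r (Suc j) \<or> c (Suc i) = c (Suc j) \<longleftrightarrow> r i = r j \<or> c i = c j" for i j
      using collinear_iff cong_add_rcancel_nat[of i 1 j N] by simp
  qed
  then show ?thesis
    by blast
qed

lemma bij_betw_mod_pair:
  fixes m n :: nat
  assumes "0 < m" "0 < n" and "coprime m n"
  shows "bij_betw (\<lambda>i. (i mod m, i mod n)) {0..<m * n} ({0..<m} \<times> {0..<n})"
proof -
  have inj: "inj_on (\<lambda>i. (i mod m, i mod n)) {0..<m * n}"
  proof (rule inj_onI)
    fix i j
    assume "i \<in> {0..<m * n}" "j \<in> {0..<m * n}" "(i mod m, i mod n) = (j mod m, j mod n)"
    then have "[i = j] (mod m)" "[i = j] (mod n)"
      by (simp_all add: cong_def)
    then have "[i = j] (mod m * n)"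
      by (rule coprime_cong_mult_nat[OF _ _ assms(3)])
    then show "i = j"
      using \<open>i \<in> {0..<m * n}\<close> \<open>j \<in> {0..<m * n}\<close> by (simp add: cong_def)
  qed
  moreover have "(\<lambda>i. (i mod m, i mod n)) ` {0..<m * n} \<subseteq> {0..<m} \<times> {0..<n}"
    using assms(1,2) by auto
  moreover have "card ((\<lambda>i. (i mod m, i mod n)) ` {0..<m * n}) = card ({0..<m} \<times> {0..<n})"
    using card_image[OF inj] by simp
  ultimately show ?thesis
    unfolding bij_betw_def by (simp add: card_subset_eq)
qed

lemma circ_adj_iff_mem:
  assumes "\<And>d e. [d = e] (mod int N) \<Longrightarrow> d \<in> S \<longleftrightarrow> e \<in> S"
    and "\<And>d. - d \<in> S \<longleftrightarrow> d \<in> S"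
  shows "circ_adj N S i j \<longleftrightarrow> int i - int j \<in> S"
proof
  assume "circ_adj N S i j"
  then obtain s where "s \<in> S" "[int i - int j = s] (mod int N) \<or> [int i - int j = - s] (mod int N)"
    unfolding circ_adj_def by blast
  then show "int i - int j \<in> S"
    using assms(1)[of "int i - int j" s] assms(1)[of "int i - int j" "- s"] assms(2)[of s] by blast
next
  assume "int i - int j \<in> S"
  then show "circ_adj N S i j"
    unfolding circ_adj_def by (blast intro: cong_refl)
qed

lemma circulant_if_coprime:
  fixes m n :: nat
  assumes "0 < m" "0 < n" and "coprime m n"
  shows "is_circulant (cart_verts (complete_verts m) (complete_verts n)) (cart_adj complete_adj complete_adj)"
proof -
  define S where "S = {d. (int m dvd d) \<noteq> (int n dvd d)}"
  have mod_eq_iff: "i mod k = j mod k \<longleftrightarrow> int k dvd int i - int j" for i j k :: nat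
    by (simp add: cong_def[symmetric] cong_int_iff[symmetric] cong_iff_dvd_diff)
  have "circ_adj (m * n) S i j \<longleftrightarrow> int i - int j \<in> S" for i j
  proof (rule circ_adj_iff_mem)
    show "d \<in> S \<longleftrightarrow> e \<in> S" if "[d = e] (mod int (m * n))" for d e
      using cong_dvd_iff[OF cong_dvd_modulus[OF that]] by (simp add: S_def)
    show "- d \<in> S \<longleftrightarrow> d \<in> S" for d
      by (simp add: S_def)
  qed
  then have "cart_adj complete_adj complete_adj (i mod m, i mod n) (j mod m, j mod n)
      \<longleftrightarrow> circ_adj (m * n) S i j" for i j
    by (auto simp: cart_adj_complete_iff mod_eq_iff S_def)
  then have "graph_iso (circ_verts (m * n)) (circ_adj (m * n) S)
      ({0..<m} \<times> {0..<n}) (cart_adj complete_adj complete_adj)"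
    unfolding graph_iso_def circ_verts_def using bij_betw_mod_pair[OF assms] by blast
  moreover have "1 \<le> m * n"
    using assms(1,2) by simp
  ultimately show ?thesis
    unfolding is_circulant_def cart_verts_def complete_verts_def by (blast intro: graph_iso_sym)
qed

lemma circulant_2_2:
  "is_circulant (cart_verts (complete_verts 2) (complete_verts 2)) (cart_adj complete_adj complete_adj)"
proof -
  define f :: "nat \<times> nat \<Rightarrow> nat" where "f p = 2 * fst p + (if fst p = snd p then 0 else 1)" for p
  have V: "cart_verts (complete_verts 2) (complete_verts 2) = {(0, 0), (0, 1), (1, 0), (1, 1)}"
    by (auto simp: cart_verts_def complete_verts_def)
  have "bij_betw f {(0, 0), (0, 1), (1, 0), (1, 1)} (circ_verts 4)"
    unfolding bij_betw_def f_def circ_verts_def by (auto simp: inj_on_def)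
  moreover have "\<forall>p\<in>{(0, 0), (0, 1), (1, 0), (1, 1)}. \<forall>q\<in>{(0, 0), (0, 1), (1, 0), (1, 1)}.
      cart_adj complete_adj complete_adj p q \<longleftrightarrow> circ_adj 4 {1} (f p) (f q)"
    by (simp add: f_def cart_adj_def complete_adj_def circ_adj_def cong_def)
  ultimately have "graph_iso {(0, 0), (0, 1), (1, 0), (1, 1)} (cart_adj complete_adj complete_adj)
      (circ_verts 4) (circ_adj 4 {1})"
    unfolding graph_iso_def by blast
  then show ?thesis
    unfolding is_circulant_def V by (intro exI[of _ 4] exI[of _ "{1}"]) simp
qed

theorem corollary5:
  fixes m n :: nat
  assumes "m \<ge> 2" and "n \<ge> 2"
  shows "is_circulant (cart_verts (complete_verts m) (complete_verts n))
                      (cart_adj complete_adj complete_adj)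
         \<longleftrightarrow> (gcd m n = 1 \<or> (m = 2 \<and> n = 2))"
proof
  assume "is_circulant (cart_verts (complete_verts m) (complete_verts n))
                      (cart_adj complete_adj complete_adj)"
  then obtain r c where "cyclic_rook m n r c"
    using cyclic_rook_if_circulant assms by blast
  then show "gcd m n = 1 \<or> (m = 2 \<and> n = 2)"
    by (rule cyclic_rook.gcd_eq_1_or_both_eq_2)
next
  assume "gcd m n = 1 \<or> (m = 2 \<and> n = 2)"
  then show "is_circulant (cart_verts (complete_verts m) (complete_verts n))
                      (cart_adj complete_adj complete_adj)"
    using circulant_if_coprime[of m n] circulant_2_2 assms by (auto simp: coprime_iff_gcd_eq_1)
qed

end
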